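(* Let $f:[0,1]\to[0,1]$, $f(x)=\frac{1-x}{1+x}$. Then $f$ is a bijection and $f\circ T\circ f^{-1}=T_E$ on $[0,1]$, where $T$ is the OOCF map and $T_E$ is the even integer continued fraction map.
   Context: For integers $k\ge1$ put $B(k+1,-1)=\left[\frac{k-1}{k},\frac{2k-1}{2k+1}\right]$ and $B(k,1)=\left[\frac{2k-1}{2k+1},\frac{k}{k+1}\right]$. The OOCF map $T:[0,1]\to[0,1]$ is $T(x)=\frac{kx-(k-1)}{k-(k+1)x}$ for $x\in B(k+1,-1)$, $T(x)=\frac{k-(k+1)x}{kx-(k-1)}$ for $x\in B(k,1)$ ($k\ge1$), and $T(1)=1$. The EICF map $T_E:[0,1]\to[0,1]$ is $T_E(y)=\frac1y-2k$ for $y\in\left[\frac1{2k+1},\frac1{2k}\right]$, $T_E(y)=2k-\frac1y$ for $y\in\left[\frac1{2k},\frac1{2k-1}\right]$ ($k\ge1$), and $T_E(0)=0$. *)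

theory Defs
  imports Complex_Main
begin

text \<open>Intervals B(k+1,-1) and B(k,1), for integers k \<ge> 1 (closed intervals, as in the paper).\<close>
definition B_minus :: "nat \<Rightarrow> real set" where
  "B_minus k = {(real k - 1) / real k .. (2 * real k - 1) / (2 * real k + 1)}"

definition B_plus :: "nat \<Rightarrow> real set" where
  "B_plus k = {(2 * real k - 1) / (2 * real k + 1) .. real k / (real k + 1)}"

text \<open>The OOCF map. On overlapping endpoints the defining formulas agree,
  so choosing any admissible k is harmless.\<close>
definition oocf_T :: "real \<Rightarrow> real" where
  "oocf_T x =
     (if x = 1 then 1
      else if (\<exists>k::nat. k \<ge> 1 \<and> x \<in> B_minus k) then
        (let k = real (SOME k::nat. k \<ge> 1 \<and> x \<in> B_minus k)
         in (k * x - (k - 1)) / (k - (k + 1) * x))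
      else
        (let k = real (SOME k::nat. k \<ge> 1 \<and> x \<in> B_plus k)
         in (k - (k + 1) * x) / (k * x - (k - 1))))"

definition eicf_T :: "real \<Rightarrow> real" where
  "eicf_T y =
     (if y = 0 then 0
      else if (\<exists>k::nat. k \<ge> 1 \<and> y \<in> {1 / (2 * real k + 1) .. 1 / (2 * real k)}) then
        (let k = real (SOME k::nat. k \<ge> 1 \<and> y \<in> {1 / (2 * real k + 1) .. 1 / (2 * real k)})
         in 1 / y - 2 * k)
      else
        (let k = real (SOME k::nat. k \<ge> 1 \<and> y \<in> {1 / (2 * real k) .. 1 / (2 * real k - 1)})
         in 2 * k - 1 / y))"

definition conj_f :: "real \<Rightarrow> real" where
  "conj_f x = (1 - x) / (1 + x)"

end

theory Submission
  imports Defs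
begin

text \<open>Substitute \<open>y = 1/t\<close> with \<open>t \<ge> 1\<close>, so that \<open>f\<^sup>-\<^sup>1 y = f y = (t-1)/(t+1)\<close>.
  Both branches of the OOCF map on \<open>B(k+1,-1)\<close> and \<open>B(k,1)\<close> correspond to \<open>t \<in> [2k-1,2k]\<close>
  and \<open>t \<in> [2k,2k+1]\<close>, which are exactly the two branches of \<open>T\<^sub>E\<close> at \<open>1/t\<close>, and after
  conjugation both maps send \<open>t\<close> to \<open>|t - 2k|\<close>, the distance from \<open>t\<close> to the nearest even
  integer. That distance does not depend on which admissible \<open>k\<close> is chosen, so the
  arbitrary choices in the definitions are harmless.\<close>

lemma conj_f_mem: "x \<in> {0..1::real} \<Longrightarrow> conj_f x \<in> {0..1}"
  by (auto simp: conj_f_def divide_simps)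

lemma conj_f_conj_f: "x \<in> {0..1::real} \<Longrightarrow> conj_f (conj_f x) = x"
  by (auto simp: conj_f_def divide_simps)

lemma bij_betw_conj_f: "bij_betw conj_f {0..1} {0..1::real}"
  using conj_f_mem conj_f_conj_f by (intro bij_betw_byWitness[where f' = conj_f]) blast+

lemma inv_into_conj_f: "y \<in> {0..1::real} \<Longrightarrow> inv_into {0..1} conj_f y = conj_f y"
  by (rule inv_into_f_eq) (use bij_betw_conj_f in \<open>auto simp: bij_betw_def conj_f_mem conj_f_conj_f\<close>)

lemma conj_f_reciprocal: "t \<ge> 1 \<Longrightarrow> conj_f (1 / t) = (t - 1) / (t + 1)"
  by (simp add: conj_f_def divide_simps)

lemma abs_diff_even_unique:
  assumes "\<bar>t - 2 * real k\<bar> \<le> 1" "\<bar>t - 2 * real j\<bar> \<le> 1"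
  shows "\<bar>t - 2 * real k\<bar> = \<bar>t - 2 * real j\<bar>"
proof (cases "k = j")
  case False
  then have "\<bar>real k - real j\<bar> \<ge> 1" by linarith
  then show ?thesis using assms by linarith
qed simp

lemma ex_near_even:
  assumes "t \<ge> (1::real)"
  obtains k :: nat where "k \<ge> 1" "\<bar>t - 2 * real k\<bar> \<le> 1"
proof -
  define n where "n = \<lfloor>(t + 1) / 2\<rfloor>"
  have "n \<ge> 1" using assms by (simp add: n_def)
  have "of_int n \<le> (t + 1) / 2" "(t + 1) / 2 < of_int n + 1"
    unfolding n_def by linarith+
  then have "\<bar>t - 2 * of_int n\<bar> \<le> 1" by argo
  then show ?thesis using that[of "nat n"] \<open>n \<ge> 1\<close> by simp
qed

lemma mem_B_minus_iff:
  assumes "t \<ge> 1" "k \<ge> 1"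
  shows "(t - 1) / (t + 1) \<in> B_minus k \<longleftrightarrow> 2 * real k - 1 \<le> t \<and> t \<le> 2 * real k"
proof -
  have "(real k - 1) / real k \<le> (t - 1) / (t + 1) \<longleftrightarrow> 2 * real k - 1 \<le> t"
    using assms by (simp add: divide_simps) (auto simp: algebra_simps)
  moreover have "(t - 1) / (t + 1) \<le> (2 * real k - 1) / (2 * real k + 1) \<longleftrightarrow> t \<le> 2 * real k"
    using assms by (simp add: divide_simps) (auto simp: algebra_simps)
  ultimately show ?thesis by (simp add: B_minus_def)
qed

lemma mem_B_plus_iff:
  assumes "t \<ge> 1" "k \<ge> 1"
  shows "(t - 1) / (t + 1) \<in> B_plus k \<longleftrightarrow> 2 * real k \<le> t \<and> t \<le> 2 * real k + 1"
proof -
  have "(2 * real k - 1) / (2 * real k + 1) \<le> (t - 1) / (t + 1) \<longleftrightarrow> 2 * real k \<le> t"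
    using assms by (simp add: divide_simps) (auto simp: algebra_simps)
  moreover have "(t - 1) / (t + 1) \<le> real k / (real k + 1) \<longleftrightarrow> t \<le> 2 * real k + 1"
    using assms by (simp add: divide_simps) (auto simp: algebra_simps)
  ultimately show ?thesis by (simp add: B_plus_def)
qed

lemma conj_f_oocf_minus_branch:
  fixes k t :: real
  assumes "t \<le> 2 * k" "t \<ge> 1"
  shows "conj_f ((k * ((t - 1) / (t + 1)) - (k - 1)) / (k - (k + 1) * ((t - 1) / (t + 1))))
         = 2 * k - t"
proof -
  have eq: "(k * ((t - 1) / (t + 1)) - (k - 1)) / (k - (k + 1) * ((t - 1) / (t + 1)))
        = (t - 2 * k + 1) / (2 * k + 1 - t)"
    using assms by (simp add: divide_simps) (auto simp: algebra_simps)
  show ?thesis unfolding eq conj_f_def using assms by (simp add: divide_simps)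
qed

lemma conj_f_oocf_plus_branch:
  fixes k t :: real
  assumes "2 * k \<le> t" "t \<ge> 1"
  shows "conj_f ((k - (k + 1) * ((t - 1) / (t + 1))) / (k * ((t - 1) / (t + 1)) - (k - 1)))
         = t - 2 * k"
proof -
  have eq: "(k - (k + 1) * ((t - 1) / (t + 1))) / (k * ((t - 1) / (t + 1)) - (k - 1))
        = (2 * k + 1 - t) / (t - 2 * k + 1)"
    using assms by (simp add: divide_simps) (auto simp: algebra_simps)
  show ?thesis unfolding eq conj_f_def using assms by (simp add: divide_simps)
qed

lemma conj_f_oocf_T_near_even:
  assumes t: "t \<ge> 1"
  obtains k :: nat where "\<bar>t - 2 * real k\<bar> \<le> 1"
    "conj_f (oocf_T ((t - 1) / (t + 1))) = \<bar>t - 2 * real k\<bar>"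
proof -
  let ?x = "(t - 1) / (t + 1)"
  have "?x \<noteq> 1" using t by (simp add: divide_simps)
  show ?thesis
  proof (cases "\<exists>k::nat. k \<ge> 1 \<and> ?x \<in> B_minus k")
    case True
    define k where "k = (SOME k::nat. k \<ge> 1 \<and> ?x \<in> B_minus k)"
    have "k \<ge> 1 \<and> ?x \<in> B_minus k"
      unfolding k_def using True by (rule someI_ex)
    then have k: "2 * real k - 1 \<le> t" "t \<le> 2 * real k"
      using mem_B_minus_iff[OF t] by auto
    have val: "conj_f (oocf_T ?x) = 2 * real k - t"
      unfolding oocf_T_def Let_def k_def[symmetric] if_not_P[OF \<open>?x \<noteq> 1\<close>] if_P[OF True]
      using conj_f_oocf_minus_branch k(2) t by simp
    show ?thesis by (rule that[of k]) (use k val in auto)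
  next
    case False
    obtain k0 :: nat where "k0 \<ge> 1" "\<bar>t - 2 * real k0\<bar> \<le> 1"
      using ex_near_even[OF t] .
    then have "2 * real k0 \<le> t \<and> t \<le> 2 * real k0 + 1"
      using False mem_B_minus_iff[OF t, of k0] by auto
    then have ex: "\<exists>k::nat. k \<ge> 1 \<and> ?x \<in> B_plus k"
      using \<open>k0 \<ge> 1\<close> mem_B_plus_iff[OF t] by blast
    define k where "k = (SOME k::nat. k \<ge> 1 \<and> ?x \<in> B_plus k)"
    have "k \<ge> 1 \<and> ?x \<in> B_plus k"
      unfolding k_def using ex by (rule someI_ex)
    then have k: "2 * real k \<le> t" "t \<le> 2 * real k + 1"
      using mem_B_plus_iff[OF t] by auto
    have val: "conj_f (oocf_T ?x) = t - 2 * real k"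
      unfolding oocf_T_def Let_def k_def[symmetric] if_not_P[OF \<open>?x \<noteq> 1\<close>] if_not_P[OF False]
      using conj_f_oocf_plus_branch k(1) t by simp
    show ?thesis by (rule that[of k]) (use k val in auto)
  qed
qed

lemma eicf_T_inverse_near_even:
  assumes t: "t \<ge> 1"
  obtains k :: nat where "\<bar>t - 2 * real k\<bar> \<le> 1" "eicf_T (1 / t) = \<bar>t - 2 * real k\<bar>"
proof -
  have upper_iff: "1 / t \<in> {1 / (2 * real k + 1) .. 1 / (2 * real k)}
                    \<longleftrightarrow> 2 * real k \<le> t \<and> t \<le> 2 * real k + 1" if "k \<ge> 1" for k :: nat
    using t that by (auto simp: divide_simps)
  have lower_iff: "1 / t \<in> {1 / (2 * real k) .. 1 / (2 * real k - 1)}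
                    \<longleftrightarrow> 2 * real k - 1 \<le> t \<and> t \<le> 2 * real k" if "k \<ge> 1" for k :: nat
  proof -
    have "2 * real k - 1 \<ge> 1" using that by simp
    then show ?thesis using t by (auto simp: divide_simps)
  qed
  have "1 / t \<noteq> 0" using t by simp
  show ?thesis
  proof (cases "\<exists>k::nat. k \<ge> 1 \<and> 1 / t \<in> {1 / (2 * real k + 1) .. 1 / (2 * real k)}")
    case True
    define k where "k = (SOME k::nat. k \<ge> 1 \<and> 1 / t \<in> {1 / (2 * real k + 1) .. 1 / (2 * real k)})"
    have "k \<ge> 1 \<and> 1 / t \<in> {1 / (2 * real k + 1) .. 1 / (2 * real k)}"
      unfolding k_def using True by (rule someI_ex)
    then have k: "2 * real k \<le> t" "t \<le> 2 * real k + 1"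
      using upper_iff by auto
    have val: "eicf_T (1 / t) = t - 2 * real k"
      unfolding eicf_T_def Let_def k_def[symmetric] if_not_P[OF \<open>1 / t \<noteq> 0\<close>] if_P[OF True]
      using t by simp
    show ?thesis by (rule that[of k]) (use k val in auto)
  next
    case False
    obtain k0 :: nat where "k0 \<ge> 1" "\<bar>t - 2 * real k0\<bar> \<le> 1"
      using ex_near_even[OF t] .
    then have "2 * real k0 - 1 \<le> t \<and> t \<le> 2 * real k0"
      using False upper_iff[of k0] by auto
    then have ex: "\<exists>k::nat. k \<ge> 1 \<and> 1 / t \<in> {1 / (2 * real k) .. 1 / (2 * real k - 1)}"
      using \<open>k0 \<ge> 1\<close> lower_iff by blast
    define k where "k = (SOME k::nat. k \<ge> 1 \<and> 1 / t \<in> {1 / (2 * real k) .. 1 / (2 * real k - 1)})"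
    have "k \<ge> 1 \<and> 1 / t \<in> {1 / (2 * real k) .. 1 / (2 * real k - 1)}"
      unfolding k_def using ex by (rule someI_ex)
    then have k: "2 * real k - 1 \<le> t" "t \<le> 2 * real k"
      using lower_iff by auto
    have val: "eicf_T (1 / t) = 2 * real k - t"
      unfolding eicf_T_def Let_def k_def[symmetric] if_not_P[OF \<open>1 / t \<noteq> 0\<close>] if_not_P[OF False]
      using t by simp
    show ?thesis by (rule that[of k]) (use k val in auto)
  qed
qed

theorem mainTheorem5:
  shows "bij_betw conj_f {0..1} {0..1} \<and>
         (\<forall>y \<in> {0..1::real}. conj_f (oocf_T (inv_into {0..1} conj_f y)) = eicf_T y)"
proof (intro conjI ballI)
  show "bij_betw conj_f {0..1} {0..1::real}" by (rule bij_betw_conj_f)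
next
  fix y :: real
  assume y: "y \<in> {0..1}"
  show "conj_f (oocf_T (inv_into {0..1} conj_f y)) = eicf_T y"
  proof (cases "y = 0")
    case True
    then show ?thesis by (simp add: inv_into_conj_f conj_f_def oocf_T_def eicf_T_def)
  next
    case False
    define t where "t = 1 / y"
    have t: "t \<ge> 1" and y_eq: "y = 1 / t" using y False by (auto simp: t_def divide_simps)
    obtain k :: nat where "\<bar>t - 2 * real k\<bar> \<le> 1"
      and "conj_f (oocf_T ((t - 1) / (t + 1))) = \<bar>t - 2 * real k\<bar>"
      using conj_f_oocf_T_near_even[OF t] .
    moreover obtain j :: nat where "\<bar>t - 2 * real j\<bar> \<le> 1" and "eicf_T (1 / t) = \<bar>t - 2 * real j\<bar>"
      using eicf_T_inverse_near_even[OF t] .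
    ultimately show ?thesis
      using abs_diff_even_unique inv_into_conj_f[OF y] conj_f_reciprocal[OF t] y_eq by metis
  qed
qed

end
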